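(* Let $\mathcal T=(T,\rho)$ be a rooted tree. The map $F_{\mathcal T}:\mathbb R^{\mathcal T}\to\mathbb R^{\mathcal T}$ is a homeomorphism and restricts to a homeomorphism from the smoothed to the rectilinear arboreal hypersurface, $F_{\mathcal T}:\mathsf H_{\mathcal T}\xrightarrow{\sim}H_{\mathcal T}$, satisfying $F_{\mathcal T}(\mathsf Q_\alpha)=Q_\alpha$ and $F_{\mathcal T}(\mathsf H_\alpha)=H_\alpha$ for all $\alpha\in V(T)$.
   Context: Rooted tree $\mathcal T=(T,\rho)$: a tree (nonempty finite connected acyclic graph) with root vertex $\rho$. Partial order on $V(T)$: $\alpha\le\beta$ iff $\alpha$ lies on the unique minimal path from $\rho$ to $\beta$; each $\alpha\ne\rho$ has a parent $\hat\alpha$ (adjacent, $\hat\alpha<\alpha$). $\mathbb R^{\mathcal T}=\mathbb R^{V(T)}$ with coordinates $x_\gamma$. Rectilinear: $Q_\alpha=\{x_\beta\ge0\text{ for all }\beta\le\alpha\}$, $H_\alpha=\partial Q_\alpha$, $H_{\mathcal T}=\bigcup_\alpha H_\alpha$. Smoothed: fix a $C^1$ function $b:\mathbb R_{>0}\to\mathbb R$ with $b\le0$, $\lim_{t\to0}b(t)=0$, $\lim_{t\to0}b'(t)=-\infty$, $b(t)=0$ for $t\gg0$, and a $C^1$ submersion $f:\mathbb R^2\to\mathbb R$ with $\{f=0\}=\{x_1=0,x_2\ge0\}\cup\{x_1>0,x_2=b(x_1)\}$, $\{f>0\}=\{x_1>0,x_2>b(x_1)\}$, $\{f<0\}=\{x_1<0\}\cup\{x_1=0,x_2<0\}\cup\{x_1>0,x_2<b(x_1)\}$.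 Set $h_\rho=x_\rho$, $h_\alpha=f(h_{\hat\alpha},x_\alpha)$ for $\alpha\ne\rho$; $\mathsf Q_\alpha=\{h_\alpha\ge0\}$, $\mathsf H_\alpha=\{h_\alpha=0\}$, $\mathsf H_{\mathcal T}=\bigcup_\alpha\mathsf H_\alpha$. Comparison map: $\varphi:\mathbb R^2\to\mathbb R$, $\varphi(x_1,x_2)=x_2$ if $x_1\le0$ and $x_2-b(x_1)$ if $x_1>0$. Set $F_\rho=x_\rho$, $F_\alpha=\varphi(h_{\hat\alpha},x_\alpha)$ for $\alpha\ne\rho$, and $F_{\mathcal T}=\{F_\alpha\}_{\alpha\in V(T)}:\mathbb R^{\mathcal T}\to\mathbb R^{\mathcal T}$. *)

theory Defs
  imports "HOL-Analysis.Analysis"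
begin

text \<open>A rooted tree on the (finite, nonempty) vertex type 'v is given by its root
  and its parent map; by convention the root is its own parent.\<close>
definition rooted_tree :: "'v::finite \<Rightarrow> ('v \<Rightarrow> 'v) \<Rightarrow> bool" where
  "rooted_tree \<rho> par \<longleftrightarrow> par \<rho> = \<rho> \<and> (\<forall>\<alpha>. \<exists>n. (par ^^ n) \<alpha> = \<rho>)"

definition tree_le :: "('v \<Rightarrow> 'v) \<Rightarrow> 'v \<Rightarrow> 'v \<Rightarrow> bool" where
  "tree_le par \<beta> \<alpha> \<longleftrightarrow> (\<exists>n. (par ^^ n) \<alpha> = \<beta>)"

definition depth :: "'v \<Rightarrow> ('v \<Rightarrow> 'v) \<Rightarrow> 'v \<Rightarrow> nat" where
  "depth \<rho> par \<alpha> = (LEAST n. (par ^^ n) \<alpha> = \<rho>)"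

definition Qrect :: "('v \<Rightarrow> 'v) \<Rightarrow> 'v \<Rightarrow> (real ^ 'v::finite) set" where
  "Qrect par \<alpha> = {x. \<forall>\<beta>. tree_le par \<beta> \<alpha> \<longrightarrow> x $ \<beta> \<ge> 0}"

definition Hrect :: "('v \<Rightarrow> 'v) \<Rightarrow> 'v \<Rightarrow> (real ^ 'v::finite) set" where
  "Hrect par \<alpha> = frontier (Qrect par \<alpha>)"

definition HrectT :: "('v \<Rightarrow> 'v) \<Rightarrow> (real ^ 'v::finite) set" where
  "HrectT par = (\<Union>\<alpha>. Hrect par \<alpha>)"

fun hiter :: "(real \<times> real \<Rightarrow> real) \<Rightarrow> ('v \<Rightarrow> 'v) \<Rightarrow> (real ^ 'v::finite) \<Rightarrow> nat \<Rightarrow> 'v \<Rightarrow> real" where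
  "hiter f par x 0 \<alpha> = x $ \<alpha>"
| "hiter f par x (Suc n) \<alpha> = f (hiter f par x n (par \<alpha>), x $ \<alpha>)"

definition hfun :: "(real \<times> real \<Rightarrow> real) \<Rightarrow> 'v \<Rightarrow> ('v \<Rightarrow> 'v) \<Rightarrow> (real ^ 'v::finite) \<Rightarrow> 'v \<Rightarrow> real" where
  "hfun f \<rho> par x \<alpha> = hiter f par x (depth \<rho> par \<alpha>) \<alpha>"

definition Qsm :: "(real \<times> real \<Rightarrow> real) \<Rightarrow> 'v \<Rightarrow> ('v \<Rightarrow> 'v) \<Rightarrow> 'v \<Rightarrow> (real ^ 'v::finite) set" where
  "Qsm f \<rho> par \<alpha> = {x. hfun f \<rho> par x \<alpha> \<ge> 0}"

definition Hsm :: "(real \<times> real \<Rightarrow> real) \<Rightarrow> 'v \<Rightarrow> ('v \<Rightarrow> 'v) \<Rightarrow> 'v \<Rightarrow> (real ^ 'v::finite) set" where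
  "Hsm f \<rho> par \<alpha> = {x. hfun f \<rho> par x \<alpha> = 0}"

definition HsmT :: "(real \<times> real \<Rightarrow> real) \<Rightarrow> 'v \<Rightarrow> ('v \<Rightarrow> 'v) \<Rightarrow> (real ^ 'v::finite) set" where
  "HsmT f \<rho> par = (\<Union>\<alpha>. Hsm f \<rho> par \<alpha>)"

definition cmp_phi :: "(real \<Rightarrow> real) \<Rightarrow> real \<times> real \<Rightarrow> real" where
  "cmp_phi b p = (if fst p \<le> 0 then snd p else snd p - b (fst p))"

definition FT :: "(real \<Rightarrow> real) \<Rightarrow> (real \<times> real \<Rightarrow> real) \<Rightarrow> 'v \<Rightarrow> ('v \<Rightarrow> 'v)
    \<Rightarrow> (real ^ 'v::finite) \<Rightarrow> real ^ 'v" where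
  "FT b f \<rho> par x = (\<chi> \<alpha>. if \<alpha> = \<rho> then x $ \<rho> else cmp_phi b (hfun f \<rho> par x (par \<alpha>), x $ \<alpha>))"

definition smoothing_fun :: "(real \<Rightarrow> real) \<Rightarrow> bool" where
  "smoothing_fun b \<longleftrightarrow>
     (\<exists>b'. (\<forall>t>0. (b has_real_derivative b' t) (at t)) \<and> continuous_on {0<..} b'
           \<and> filterlim b' at_bot (at_right 0))
   \<and> (\<forall>t>0. b t \<le> 0)
   \<and> (b \<longlongrightarrow> 0) (at_right 0)
   \<and> (\<exists>M. \<forall>t\<ge>M. b t = 0)"

definition smoothing_submersion :: "(real \<Rightarrow> real) \<Rightarrow> (real \<times> real \<Rightarrow> real) \<Rightarrow> bool" where
  "smoothing_submersion b f \<longleftrightarrow>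
     (\<exists>D1 D2. (\<forall>p. (f has_derivative (\<lambda>(u, v). D1 p * u + D2 p * v)) (at p))
             \<and> continuous_on UNIV D1 \<and> continuous_on UNIV D2
             \<and> (\<forall>p. (D1 p, D2 p) \<noteq> (0, 0)))
   \<and> {p. f p = 0} = {(x1, x2). x1 = 0 \<and> x2 \<ge> 0} \<union> {(x1, x2). x1 > 0 \<and> x2 = b x1}
   \<and> {p. f p > 0} = {(x1, x2). x1 > 0 \<and> x2 > b x1}
   \<and> {p. f p < 0} = {(x1, x2). x1 < 0} \<union> {(x1, x2). x1 = 0 \<and> x2 < 0}
                     \<union> {(x1, x2). x1 > 0 \<and> x2 < b x1}"

end

theory Submission
  imports Defs
begin

text \<open>Since h \<alpha> depends only on the coordinates on the path from the root to \<alpha>,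
  the map F, which subtracts the zero extension of b evaluated at h of the parent, is a
  triangular shear. Its inverse is the shear adding the same quantity back, which
  recomputes h top-down from the root using f (s, t + b s) in place of f; both are
  continuous. The sign conditions on f say that f (s, t) \<ge> 0 iff s \<ge> 0 and
  \<phi> (s, t) \<ge> 0, and f (s, t) = 0 iff moreover one of the two vanishes. Induction along
  the path to the root therefore identifies the smoothed Q \<alpha> and H \<alpha> with the
  preimages under F of the rectilinear Q \<alpha> and H \<alpha>.\<close>

lemma depth_root:
  "depth \<rho> par \<rho> = 0"
  unfolding depth_def by (rule Least_eq_0) simp

lemma depth_parent:
  assumes T: "rooted_tree \<rho> par" and "\<alpha> \<noteq> \<rho>"
  shows "depth \<rho> par \<alpha> = Suc (depth \<rho> par (par \<alpha>))"
proof -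
  have reach: "\<exists>n. (par ^^ n) \<gamma> = \<rho>" for \<gamma>
    using T unfolding rooted_tree_def by blast
  have shift: "(par ^^ Suc n) \<alpha> = (par ^^ n) (par \<alpha>)" for n
    by (simp only: funpow_Suc_right o_apply)
  have least: "(par ^^ depth \<rho> par \<gamma>) \<gamma> = \<rho>" for \<gamma>
    unfolding depth_def by (rule LeastI_ex[OF reach])
  have "depth \<rho> par \<alpha> \<noteq> 0"
    using least[of \<alpha>] \<open>\<alpha> \<noteq> \<rho>\<close> by (metis funpow_0)
  then obtain m where m: "depth \<rho> par \<alpha> = Suc m"
    using not0_implies_Suc by blast
  have "(par ^^ m) (par \<alpha>) = \<rho>"
    using least[of \<alpha>] m unfolding shift[symmetric] by simp
  then have "depth \<rho> par (par \<alpha>) \<le> m"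
    unfolding depth_def by (rule Least_le)
  moreover have "depth \<rho> par \<alpha> \<le> Suc (depth \<rho> par (par \<alpha>))"
    using least[of "par \<alpha>"] unfolding shift[symmetric] depth_def[of _ _ \<alpha>]
    by (rule Least_le)
  ultimately show ?thesis
    using m by simp
qed

lemma rooted_tree_induct [consumes 1, case_names root parent]:
  assumes "rooted_tree \<rho> par"
    and "P \<rho>"
    and "\<And>\<alpha>. \<alpha> \<noteq> \<rho> \<Longrightarrow> P (par \<alpha>) \<Longrightarrow> P \<alpha>"
  shows "P \<alpha>"
proof (induction \<alpha> rule: measure_induct_rule[where f = "depth \<rho> par"])
  case (less \<alpha>)
  then show ?case
    using assms depth_parent[OF assms(1)] by (cases "\<alpha> = \<rho>") auto
qed

lemma tree_le_root_iff:
  assumes "rooted_tree \<rho> par"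
  shows "tree_le par \<beta> \<rho> \<longleftrightarrow> \<beta> = \<rho>"
proof -
  have "(par ^^ n) \<rho> = \<rho>" for n
    using assms unfolding rooted_tree_def by (induction n) auto
  then show ?thesis
    unfolding tree_le_def by (metis funpow_0)
qed

lemma tree_le_parent_iff:
  "tree_le par \<beta> \<alpha> \<longleftrightarrow> \<beta> = \<alpha> \<or> tree_le par \<beta> (par \<alpha>)"
  unfolding tree_le_def
  by (metis funpow_0 funpow_Suc_right o_apply not0_implies_Suc)

lemma hfun_root:
  "hfun g \<rho> par x \<rho> = x $ \<rho>"
  unfolding hfun_def depth_root by simp

lemma hfun_parent:
  assumes "rooted_tree \<rho> par" and "\<alpha> \<noteq> \<rho>"
  shows "hfun g \<rho> par x \<alpha> = g (hfun g \<rho> par x (par \<alpha>), x $ \<alpha>)"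
  unfolding hfun_def depth_parent[OF assms] by simp

lemma continuous_on_hfun:
  assumes T: "rooted_tree \<rho> par" and g: "continuous_on UNIV g"
  shows "continuous_on UNIV (\<lambda>x. hfun g \<rho> par x \<alpha>)"
  using T
proof (induction \<alpha> rule: rooted_tree_induct)
  case root
  then show ?case
    unfolding hfun_root by (intro continuous_intros)
next
  case (parent \<alpha>)
  have "continuous_on UNIV (\<lambda>x. g (hfun g \<rho> par x (par \<alpha>), x $ \<alpha>))"
    by (rule continuous_on_compose2[OF g]) (auto intro!: continuous_intros parent)
  then show ?case
    unfolding hfun_parent[OF T parent(1)] .
qed

text \<open>Both the comparison map and its inverse are shears of this form.\<close>
definition tree_shear :: "(real \<Rightarrow> real) \<Rightarrow> (real \<times> real \<Rightarrow> real) \<Rightarrow> 'v \<Rightarrow> ('v \<Rightarrow> 'v)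
    \<Rightarrow> real ^ 'v::finite \<Rightarrow> real ^ 'v" where
  "tree_shear c g \<rho> par x =
     (\<chi> \<alpha>. if \<alpha> = \<rho> then x $ \<rho> else x $ \<alpha> + c (hfun g \<rho> par x (par \<alpha>)))"

lemma tree_shear_nth:
  "tree_shear c g \<rho> par x $ \<alpha> =
     (if \<alpha> = \<rho> then x $ \<rho> else x $ \<alpha> + c (hfun g \<rho> par x (par \<alpha>)))"
  unfolding tree_shear_def by simp

lemma hfun_tree_shear:
  assumes T: "rooted_tree \<rho> par"
  shows "hfun (\<lambda>(s, t). g (s, t - c s)) \<rho> par (tree_shear c g \<rho> par x) \<alpha> = hfun g \<rho> par x \<alpha>"
  using T
proof (induction \<alpha> rule: rooted_tree_induct)
  case root
  then show ?case
    by (simp add: hfun_root tree_shear_nth)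
next
  case (parent \<alpha>)
  then show ?case
    by (simp add: hfun_parent[OF T] tree_shear_nth)
qed

lemma tree_shear_inverse:
  assumes "rooted_tree \<rho> par"
  shows "tree_shear (\<lambda>s. - c s) (\<lambda>(s, t). g (s, t - c s)) \<rho> par (tree_shear c g \<rho> par x) = x"
  by (simp add: vec_eq_iff tree_shear_nth hfun_tree_shear[OF assms])

lemma continuous_on_tree_shear:
  assumes T: "rooted_tree \<rho> par" and c: "continuous_on UNIV c" and g: "continuous_on UNIV g"
  shows "continuous_on UNIV (tree_shear c g \<rho> par)"
proof -
  have "continuous_on UNIV (\<lambda>x. tree_shear c g \<rho> par x $ \<alpha>)" for \<alpha>
    unfolding tree_shear_nth
    by (cases "\<alpha> = \<rho>")
      (auto intro!: continuous_intros continuous_on_compose2[OF c] continuous_on_hfun[OF T g])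
  then show ?thesis
    by (rule continuous_on_vec_lambda[of UNIV "\<lambda>\<alpha> x. tree_shear c g \<rho> par x $ \<alpha>",
          unfolded vec_lambda_eta])
qed

lemma homeomorphism_tree_shear:
  assumes T: "rooted_tree \<rho> par" and c: "continuous_on UNIV c" and g: "continuous_on UNIV g"
  shows "homeomorphism UNIV UNIV (tree_shear c g \<rho> par)
           (tree_shear (\<lambda>s. - c s) (\<lambda>(s, t). g (s, t - c s)) \<rho> par)"
proof (rule homeomorphismI)
  have "continuous_on UNIV (\<lambda>(s, t). g (s, t - c s))"
    unfolding case_prod_beta'
    by (intro continuous_on_compose2[OF g] continuous_intros continuous_on_compose2[OF c]) auto
  then show "continuous_on UNIV (tree_shear (\<lambda>s. - c s) (\<lambda>(s, t). g (s, t - c s)) \<rho> par)"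
    by (intro continuous_on_tree_shear[OF T] continuous_intros c)
  show "tree_shear c g \<rho> par (tree_shear (\<lambda>s. - c s) (\<lambda>(s, t). g (s, t - c s)) \<rho> par y) = y"
    for y
    using tree_shear_inverse[OF T, of "\<lambda>s. - c s" "\<lambda>(s, t). g (s, t - c s)"]
    by (simp add: case_prod_beta')
qed (auto simp: tree_shear_inverse[OF T] continuous_on_tree_shear[OF T c g])

text \<open>With the extension of b by zero, cmp_phi b (s, t) = t - zero_ext b s.\<close>
definition zero_ext :: "(real \<Rightarrow> real) \<Rightarrow> real \<Rightarrow> real" where
  "zero_ext b t = (if t \<le> 0 then 0 else b t)"

lemma continuous_on_zero_ext:
  assumes b: "continuous_on {0<..} b" and lim: "(b \<longlongrightarrow> 0) (at_right 0)"
  shows "continuous_on UNIV (zero_ext b)"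
proof -
  have "isCont (zero_ext b) t" for t
  proof (cases t "0::real" rule: linorder_cases)
    case less
    have "\<forall>\<^sub>F s in nhds t. 0 = zero_ext b s"
      using eventually_nhds_in_open[of "{..<0}" t] less
      by (auto elim!: eventually_mono simp: zero_ext_def)
    then show ?thesis
      using isCont_cong by fastforce
  next
    case greater
    have "\<forall>\<^sub>F s in nhds t. b s = zero_ext b s"
      using eventually_nhds_in_open[of "{0<..}" t] greater
      by (auto elim!: eventually_mono simp: zero_ext_def)
    moreover have "isCont b t"
      using b greater by (simp add: continuous_on_eq_continuous_at)
    ultimately show ?thesis
      using isCont_cong by fastforce
  next
    case equal
    have "(zero_ext b \<longlongrightarrow> 0) (at_left 0)"
      by (rule tendsto_eventually) (simp add: eventually_at_filter zero_ext_def)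
    moreover have "(zero_ext b \<longlongrightarrow> 0) (at_right 0)"
      using lim eventually_at_right_less[of "0::real"]
      by (subst tendsto_cong) (auto elim!: eventually_mono simp: zero_ext_def)
    ultimately show ?thesis
      using equal by (simp add: isCont_def filterlim_split_at_real zero_ext_def)
  qed
  then show ?thesis
    by (simp add: continuous_at_imp_continuous_on)
qed

lemma smoothing_fun_continuous_zero_ext:
  assumes "smoothing_fun b"
  shows "continuous_on UNIV (zero_ext b)"
proof (rule continuous_on_zero_ext)
  show "continuous_on {0<..} b"
    using assms unfolding smoothing_fun_def
    by (meson DERIV_isCont continuous_at_imp_continuous_on greaterThan_iff)
  show "(b \<longlongrightarrow> 0) (at_right 0)"
    using assms unfolding smoothing_fun_def by blast
qed

lemma FT_eq_tree_shear:
  "FT b f \<rho> par = tree_shear (\<lambda>s. - zero_ext b s) f \<rho> par"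
  by (auto simp: fun_eq_iff vec_eq_iff FT_def tree_shear_def cmp_phi_def zero_ext_def)

lemma smoothing_submersion_continuous:
  assumes "smoothing_submersion b f"
  shows "continuous_on UNIV f"
  using assms unfolding smoothing_submersion_def
  by (meson continuous_at_imp_continuous_on has_derivative_continuous)

lemma smoothing_submersion_sign:
  assumes "smoothing_submersion b f"
  shows "f p \<ge> 0 \<longleftrightarrow> fst p \<ge> 0 \<and> cmp_phi b p \<ge> 0"
    and "f p = 0 \<longleftrightarrow> fst p \<ge> 0 \<and> cmp_phi b p \<ge> 0 \<and> (fst p = 0 \<or> cmp_phi b p = 0)"
proof -
  have zero: "f p = 0 \<longleftrightarrow> (fst p = 0 \<and> snd p \<ge> 0) \<or> (fst p > 0 \<and> snd p = b (fst p))"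
    and pos: "f p > 0 \<longleftrightarrow> fst p > 0 \<and> snd p > b (fst p)"
    using assms unfolding smoothing_submersion_def by (cases p; auto simp: set_eq_iff)+
  show "f p \<ge> 0 \<longleftrightarrow> fst p \<ge> 0 \<and> cmp_phi b p \<ge> 0"
    using zero pos unfolding cmp_phi_def by auto
  show "f p = 0 \<longleftrightarrow> fst p \<ge> 0 \<and> cmp_phi b p \<ge> 0 \<and> (fst p = 0 \<or> cmp_phi b p = 0)"
    using zero unfolding cmp_phi_def by auto
qed

lemma hfun_sign_FT:
  assumes T: "rooted_tree \<rho> par" and S: "smoothing_submersion b f"
  shows "(hfun f \<rho> par x \<alpha> \<ge> 0 \<longleftrightarrow> (\<forall>\<beta>. tree_le par \<beta> \<alpha> \<longrightarrow> FT b f \<rho> par x $ \<beta> \<ge> 0))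
       \<and> (hfun f \<rho> par x \<alpha> = 0 \<longleftrightarrow> (\<forall>\<beta>. tree_le par \<beta> \<alpha> \<longrightarrow> FT b f \<rho> par x $ \<beta> \<ge> 0)
              \<and> (\<exists>\<beta>. tree_le par \<beta> \<alpha> \<and> FT b f \<rho> par x $ \<beta> = 0))"
  using T
proof (induction \<alpha> rule: rooted_tree_induct)
  case root
  then show ?case
    by (auto simp: tree_le_root_iff[OF T] hfun_root FT_def)
next
  case (parent \<alpha>)
  have "FT b f \<rho> par x $ \<alpha> = cmp_phi b (hfun f \<rho> par x (par \<alpha>), x $ \<alpha>)"
    using parent(1) by (simp add: FT_def)
  then show ?case
    unfolding hfun_parent[OF T parent(1)] smoothing_submersion_sign[OF S] fst_conv
      tree_le_parent_iff[of par _ \<alpha>]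
    using parent(2) by auto
qed

lemma frontier_nonneg_cart:
  "frontier {x :: real ^ 'n. \<forall>\<beta>\<in>A. x $ \<beta> \<ge> 0}
     = {x. (\<forall>\<beta>\<in>A. x $ \<beta> \<ge> 0) \<and> (\<exists>\<beta>\<in>A. x $ \<beta> = 0)}"
proof -
  have eq: "{x :: real ^ 'n. \<forall>\<beta>\<in>A. x $ \<beta> \<ge> 0} = (\<Inter>\<beta>\<in>A. {x. x $ \<beta> \<ge> 0})"
    by auto
  have "finite A"
    by simp
  then have "interior (\<Inter>\<beta>\<in>A. {x :: real ^ 'n. x $ \<beta> \<ge> 0}) = (\<Inter>\<beta>\<in>A. {x. x $ \<beta> > 0})"
    by (induction A rule: finite_induct) auto
  moreover have "closed (\<Inter>\<beta>\<in>A. {x :: real ^ 'n. x $ \<beta> \<ge> 0})"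
    by (intro closed_INT ballI closed_halfspace_component_ge_cart)
  ultimately show ?thesis
    unfolding eq frontier_def by (auto simp: less_le)
qed

lemma Hrect_eq:
  "Hrect par \<alpha> = {y. (\<forall>\<beta>. tree_le par \<beta> \<alpha> \<longrightarrow> y $ \<beta> \<ge> 0) \<and> (\<exists>\<beta>. tree_le par \<beta> \<alpha> \<and> y $ \<beta> = 0)}"
  using frontier_nonneg_cart[of "{\<beta>. tree_le par \<beta> \<alpha>}"]
  by (simp add: Hrect_def Qrect_def)

lemma Qsm_eq_vimage_FT:
  assumes "rooted_tree \<rho> par" and "smoothing_submersion b f"
  shows "Qsm f \<rho> par \<alpha> = FT b f \<rho> par -` Qrect par \<alpha>"
  using hfun_sign_FT[OF assms] by (auto simp: Qsm_def Qrect_def)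

lemma Hsm_eq_vimage_FT:
  assumes "rooted_tree \<rho> par" and "smoothing_submersion b f"
  shows "Hsm f \<rho> par \<alpha> = FT b f \<rho> par -` Hrect par \<alpha>"
  using hfun_sign_FT[OF assms] by (auto simp: Hsm_def Hrect_eq)

theorem proposition3p13:
  fixes \<rho> :: "'v::finite" and par :: "'v \<Rightarrow> 'v"
    and b :: "real \<Rightarrow> real" and f :: "real \<times> real \<Rightarrow> real"
  assumes "rooted_tree \<rho> par"
    and "smoothing_fun b"
    and "smoothing_submersion b f"
  shows "\<exists>G. homeomorphism UNIV UNIV (FT b f \<rho> par) G
           \<and> homeomorphism (HsmT f \<rho> par) (HrectT par) (FT b f \<rho> par) G
           \<and> (\<forall>\<alpha>. FT b f \<rho> par ` Qsm f \<rho> par \<alpha> = Qrect par \<alpha>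
                 \<and> FT b f \<rho> par ` Hsm f \<rho> par \<alpha> = Hrect par \<alpha>)"
proof -
  define c where "c = (\<lambda>s. - zero_ext b s)"
  define G where "G = tree_shear (\<lambda>s. - c s) (\<lambda>(s, t). f (s, t - c s)) \<rho> par"
  have "continuous_on UNIV c"
    unfolding c_def using smoothing_fun_continuous_zero_ext[OF assms(2)]
    by (intro continuous_intros)
  then have hom: "homeomorphism UNIV UNIV (FT b f \<rho> par) G"
    unfolding FT_eq_tree_shear G_def c_def[symmetric]
    by (intro homeomorphism_tree_shear assms(1) smoothing_submersion_continuous[OF assms(3)])
  then have surj: "surj (FT b f \<rho> par)"
    by (simp add: homeomorphism_def)
  have Q: "FT b f \<rho> par ` Qsm f \<rho> par \<alpha> = Qrect par \<alpha>"
    and H: "FT b f \<rho> par ` Hsm f \<rho> par \<alpha> = Hrect par \<alpha>" for \<alpha>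
    unfolding Qsm_eq_vimage_FT[OF assms(1,3)] Hsm_eq_vimage_FT[OF assms(1,3)]
    by (rule surj_image_vimage_eq[OF surj])+
  have "FT b f \<rho> par ` HsmT f \<rho> par = HrectT par"
    unfolding HsmT_def HrectT_def image_UN H ..
  then have "homeomorphism (HsmT f \<rho> par) (HrectT par) (FT b f \<rho> par) G"
    by (intro homeomorphism_of_subsets[OF hom]) auto
  with hom Q H show ?thesis
    by blast
qed

end
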